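(* Let $(\mathbf x,\mathbf p,\mu)$ be a deterministic TFM satisfying UIC and $1$-SCP. If $x_i(\mathbf b_{-i},b_i)=x_i(\mathbf b_{-i},b_i')$ for some bid vector $\mathbf b$, user $i$ and bid $b_i'\ge0$, then $\mu(\mathbf b_{-i},b_i)=\mu(\mathbf b_{-i},b_i')$.
   Context: Setting (TFM). Each user $i$ has a true value $v_i\ge0$ and submits a single bid $b_i\ge0$; $\mathbf b=(b_1,\dots,b_m)$, $\mathbf b_{-i}$ the other bids. A TFM has an inclusion rule (run by the miner) and confirmation, payment and miner-revenue rules (run by the blockchain on included bids). Composing the honest inclusion rule with the others gives deterministic $(\mathbf x,\mathbf p,\mu)$: $x_i(\mathbf b)\in\{0,1\}$ indicates confirmation of user $i$, $p_i(\mathbf b)\le b_i$ its payment ($0$ if unconfirmed), $\mu(\mathbf b)$ the miner revenue. Strategic players may bid untruthfully after seeing all other bids, inject fake bids (true value $0$), and (if the miner is involved) choose which bids to include. Utility: miner revenue (if the miner is in the player) plus $v-p$ for each confirmed transaction of the player with true value $v$ and payment $p$. UIC: with an honest miner each user's utility is maximized by truthful bidding, whatever the other bids. $1$-SCP: for every coalition of the miner and one user, joint utility is maximized by truthful bidding and honest miner behavior, whatever the other bids. *)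

theory Defs
  imports Complex_Main
begin

text \<open>
  Bid vectors are lists of reals; user i is position i.  A TFM consists of an
  inclusion rule (run by the miner; returns the set of positions it includes)
  and confirmation / payment / miner-revenue rules that the blockchain runs on
  the list of included bids (in their original order).
\<close>

record tfm =
  incl :: "real list \<Rightarrow> nat set"
  conf :: "real list \<Rightarrow> nat \<Rightarrow> bool"
  pay  :: "real list \<Rightarrow> nat \<Rightarrow> real"
  mrev :: "real list \<Rightarrow> real"

definition nonneg_bids :: "real list \<Rightarrow> bool" where
  "nonneg_bids b \<longleftrightarrow> (\<forall>j<length b. 0 \<le> b ! j)"

text \<open>position of original index i inside the included list nths b S\<close>
definition pos_in :: "nat set \<Rightarrow> nat \<Rightarrow> nat" where
  "pos_in S i = card {j\<in>S. j < i}"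

definition conf_out :: "tfm \<Rightarrow> real list \<Rightarrow> nat set \<Rightarrow> nat \<Rightarrow> bool" where
  "conf_out M b S i \<longleftrightarrow> i < length b \<and> i \<in> S \<and> conf M (nths b S) (pos_in S i)"

definition pay_out :: "tfm \<Rightarrow> real list \<Rightarrow> nat set \<Rightarrow> nat \<Rightarrow> real" where
  "pay_out M b S i = (if conf_out M b S i then pay M (nths b S) (pos_in S i) else 0)"

definition rev_out :: "tfm \<Rightarrow> real list \<Rightarrow> nat set \<Rightarrow> real" where
  "rev_out M b S = mrev M (nths b S)"

definition xh :: "tfm \<Rightarrow> real list \<Rightarrow> nat \<Rightarrow> bool" where
  "xh M b i = conf_out M b (incl M b) i"

definition ph :: "tfm \<Rightarrow> real list \<Rightarrow> nat \<Rightarrow> real" where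
  "ph M b i = pay_out M b (incl M b) i"

definition muh :: "tfm \<Rightarrow> real list \<Rightarrow> real" where
  "muh M b = rev_out M b (incl M b)"

text \<open>well-formedness: inclusion picks existing bids; payments never exceed the bid
  (unconfirmed users pay 0 by construction of pay_out)\<close>
definition valid_tfm :: "tfm \<Rightarrow> bool" where
  "valid_tfm M \<longleftrightarrow>
     (\<forall>b. incl M b \<subseteq> {..<length b}) \<and>
     (\<forall>B j. j < length B \<longrightarrow> conf M B j \<longrightarrow> pay M B j \<le> B ! j)"

text \<open>Utility of user i (true value v) when the submitted vector is b' (its
  real transaction at position i, its fake bids at positions n..<length b'),
  and the bids at positions S are included.\<close>
definition user_util :: "tfm \<Rightarrow> real \<Rightarrow> nat \<Rightarrow> nat \<Rightarrow> real list \<Rightarrow> nat set \<Rightarrow> real" where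
  "user_util M v i n b' S =
     (if conf_out M b' S i then v - pay_out M b' S i else 0)
     - (\<Sum>j\<in>{n..<length b'}. pay_out M b' S j)"

definition UIC :: "tfm \<Rightarrow> bool" where
  "UIC M \<longleftrightarrow>
    (\<forall>b i beta fs. nonneg_bids b \<longrightarrow> i < length b \<longrightarrow> 0 \<le> beta \<longrightarrow> nonneg_bids fs \<longrightarrow>
       (let b' = b[i := beta] @ fs in
          user_util M (b ! i) i (length b) b' (incl M b')
          \<le> user_util M (b ! i) i (length b) b (incl M b)))"

definition SCP1 :: "tfm \<Rightarrow> bool" where
  "SCP1 M \<longleftrightarrow>
    (\<forall>b i beta fs S. nonneg_bids b \<longrightarrow> i < length b \<longrightarrow> 0 \<le> beta \<longrightarrow> nonneg_bids fs \<longrightarrow>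
       (let b' = b[i := beta] @ fs in
          S \<subseteq> {..<length b'} \<longrightarrow>
          rev_out M b' S + user_util M (b ! i) i (length b) b' S
          \<le> muh M b + user_util M (b ! i) i (length b) b (incl M b)))"

end

theory Submission
  imports Defs
begin

text \<open>
  Truthfulness for the user alone (UIC) already forces the payment of user i to be the
  same under b and under b[i := beta] whenever its confirmation status is the same: each
  bid is a possible deviation from the other, once with true value b!i and once with
  true value beta.  Hence the user's utility is unchanged, and the two 1-SCP inequalities
  for the miner-user coalition, again applied in both directions, squeeze the miner
  revenues together.
\<close>

definition honest_util :: "tfm \<Rightarrow> real \<Rightarrow> real list \<Rightarrow> nat \<Rightarrow> real" where
  "honest_util M v b i = (if xh M b i then v - ph M b i else 0)"

lemma user_util_honest:
  "user_util M v i (length b) b (incl M b) = honest_util M v b i"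
  by (simp add: user_util_def honest_util_def xh_def ph_def)

lemma nonneg_bids_list_update:
  "nonneg_bids b \<Longrightarrow> 0 \<le> beta \<Longrightarrow> nonneg_bids (b[i := beta])"
  unfolding nonneg_bids_def by (cases "i < length b") (auto simp: nth_list_update)

lemma nonneg_bids_Nil: "nonneg_bids []"
  by (simp add: nonneg_bids_def)

lemma UIC_honest_util_le:
  assumes "UIC M" "nonneg_bids b" "i < length b" "0 \<le> beta"
  shows "honest_util M (b ! i) (b[i := beta]) i \<le> honest_util M (b ! i) b i"
  using assms nonneg_bids_Nil unfolding UIC_def
  by (metis append_Nil2 length_list_update user_util_honest)

lemma SCP1_muh_honest_util_le:
  assumes "valid_tfm M" "SCP1 M" "nonneg_bids b" "i < length b" "0 \<le> beta"
  shows "muh M (b[i := beta]) + honest_util M (b ! i) (b[i := beta]) i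
           \<le> muh M b + honest_util M (b ! i) b i"
proof -
  have "incl M (b[i := beta]) \<subseteq> {..<length (b[i := beta])}"
    using assms(1) by (simp add: valid_tfm_def del: length_list_update)
  then show ?thesis
    using assms(2-5) nonneg_bids_Nil unfolding SCP1_def
    by (metis append_Nil2 length_list_update muh_def user_util_honest)
qed

lemma UIC_pay_eq_if_conf_eq:
  assumes "UIC M" "nonneg_bids b" "i < length b" "0 \<le> beta"
    and "xh M b i" "xh M (b[i := beta]) i"
  shows "ph M b i = ph M (b[i := beta]) i"
proof -
  let ?c = "b[i := beta]"
  have "honest_util M (b ! i) ?c i \<le> honest_util M (b ! i) b i"
    using UIC_honest_util_le assms(1-4) .
  moreover have "honest_util M (?c ! i) (?c[i := b ! i]) i \<le> honest_util M (?c ! i) ?c i"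
    using assms(2-4) by (intro UIC_honest_util_le assms(1) nonneg_bids_list_update)
      (auto simp: nonneg_bids_def)
  ultimately show ?thesis
    using assms(3,5,6) by (simp add: honest_util_def)
qed

lemma UIC_honest_util_eq_if_conf_eq:
  assumes "UIC M" "nonneg_bids b" "i < length b" "0 \<le> beta"
    and "xh M b i = xh M (b[i := beta]) i"
  shows "honest_util M v b i = honest_util M v (b[i := beta]) i"
  using UIC_pay_eq_if_conf_eq[OF assms(1-4)] assms(5) by (simp add: honest_util_def)

theorem mainTheorem11:
  fixes M :: tfm and b :: "real list" and i :: nat and beta :: real
  assumes "valid_tfm M" and "UIC M" and "SCP1 M"
    and "nonneg_bids b" and "i < length b" and "0 \<le> beta"
    and "xh M b i = xh M (b[i := beta]) i"
  shows "muh M b = muh M (b[i := beta])"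
proof -
  let ?c = "b[i := beta]"
  have c: "nonneg_bids ?c" "i < length ?c" "0 \<le> b ! i" "?c ! i = beta" "?c[i := b ! i] = b"
    using assms(4-6) nonneg_bids_list_update by (auto simp: nonneg_bids_def)
  have "honest_util M v b i = honest_util M v ?c i" for v
    using UIC_honest_util_eq_if_conf_eq assms(2,4-7) .
  moreover have "muh M ?c + honest_util M (b ! i) ?c i \<le> muh M b + honest_util M (b ! i) b i"
    using SCP1_muh_honest_util_le assms(1,3-6) .
  moreover have "muh M b + honest_util M beta b i \<le> muh M ?c + honest_util M beta ?c i"
    using SCP1_muh_honest_util_le[OF assms(1,3) c(1,2,3)] c(4,5) by simp
  ultimately show ?thesis by simp
qed

end
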